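(* Let $P$ be a positive, completely labelled causal logic program, $p$ an atom, $k\in\{1,2,\dots\}\cup\{\omega\}$ and $G$ a causal graph. If $G$ is a $\le$-maximal element of $T_P\!\uparrow\!k(p)$ and $\mathrm{height}(G)=h\le k$, then $G\in T_P\!\uparrow\!h(p)$.
   Context: Causal graphs: reflexively–transitively closed directed graphs on labels; $G\le G'$ iff $G\supseteq G'$; $G*G'=(G\cup G')^*$, $G\cdot G'$ the closure of the graph with vertices $V\cup V'$ and edges $E\cup E'\cup(V\times V')$. Causal values: down-sets of causal graphs; $*$ intersection, $+$ union, $U\cdot U'={\downarrow}\{G\cdot G'\}$; a label $l$ denotes ${\downarrow}$ of the graph with only edge $(l,l)$, $1$ all causal graphs, $0=\emptyset$. Rules $t:H\leftarrow B_1,\dots,B_n$; positive = no default negation; completely labelled = every rule has a label and labels are pairwise distinct. $T_P(I)(p)=\sum\{(I(B_1)*\dots*I(B_n))\cdot t\mid(t:p\leftarrow B_1,\dots,B_n)\in P\}$, $T_P\!\uparrow\!0=$ all atoms $0$, $T_P\!\uparrow\!(k+1)=T_P(T_P\!\uparrow\!k)$, $T_P\!\uparrow\!\omega(p)=\sum_{k<\omega}T_P\!\uparrow\!k(p)$. $\mathrm{height}(G)$ is the maximal number of vertices of a simple directed path (no repeated vertices) in $G$; a single-vertex graph has height $1$. *)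

theory Defs
  imports Main "HOL-Library.Extended_Nat"
begin

(* Causal graphs over labels 'l are represented by their edge relation.
   Since they are reflexively closed, the vertex set is the field. *)
type_synonym 'l cgraph = "('l \<times> 'l) set"
type_synonym 'l cvalue = "'l cgraph set"

definition causal_graph :: "'l cgraph \<Rightarrow> bool" where
  "causal_graph G \<longleftrightarrow> (\<forall>x\<in>Field G. (x, x) \<in> G) \<and> trans G"

definition cvertices :: "'l cgraph \<Rightarrow> 'l set" where
  "cvertices G = Field G"

definition cg_le :: "'l cgraph \<Rightarrow> 'l cgraph \<Rightarrow> bool" where
  "cg_le G G' \<longleftrightarrow> G' \<subseteq> G"

definition rt_close :: "'l set \<Rightarrow> ('l \<times> 'l) set \<Rightarrow> 'l cgraph" where
  "rt_close V E = E\<^sup>+ \<union> Id_on V"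

definition cg_star :: "'l cgraph \<Rightarrow> 'l cgraph \<Rightarrow> 'l cgraph" where
  "cg_star G G' = rt_close (cvertices G \<union> cvertices G') (G \<union> G')"

definition cg_dot :: "'l cgraph \<Rightarrow> 'l cgraph \<Rightarrow> 'l cgraph" where
  "cg_dot G G' = rt_close (cvertices G \<union> cvertices G')
                   (G \<union> G' \<union> (cvertices G \<times> cvertices G'))"

definition down :: "'l cgraph set \<Rightarrow> 'l cvalue" where
  "down S = {G. causal_graph G \<and> (\<exists>H\<in>S. cg_le G H)}"

definition cv_one :: "'l cvalue" where
  "cv_one = {G. causal_graph G}"

definition cv_zero :: "'l cvalue" where
  "cv_zero = {}"

definition cv_times :: "'l cvalue \<Rightarrow> 'l cvalue \<Rightarrow> 'l cvalue" where
  "cv_times U U' = U \<inter> U'"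

definition cv_prod :: "'l cvalue \<Rightarrow> 'l cvalue \<Rightarrow> 'l cvalue" where
  "cv_prod U U' = down {cg_dot G G' | G G'. G \<in> U \<and> G' \<in> U'}"

definition cv_label :: "'l \<Rightarrow> 'l cvalue" where
  "cv_label l = down {{(l, l)}}"

(* Rules t : H <- B_1,...,B_n, not C_1, ..., not C_m *)
datatype ('a, 'l) rule =
  Rule (rlabel: "'l option") (rhead: 'a) (rpos: "'a list") (rneg: "'a list")

type_synonym ('a, 'l) program = "('a, 'l) rule set"

definition positive :: "('a, 'l) program \<Rightarrow> bool" where
  "positive P \<longleftrightarrow> (\<forall>r\<in>P. rneg r = [])"

definition completely_labelled :: "('a, 'l) program \<Rightarrow> bool" where
  "completely_labelled P \<longleftrightarrow>
     (\<forall>r\<in>P. rlabel r \<noteq> None) \<and>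
     (\<forall>r\<in>P. \<forall>r'\<in>P. rlabel r = rlabel r' \<longrightarrow> r = r')"

type_synonym ('a, 'l) cinterp = "'a \<Rightarrow> 'l cvalue"

definition body_val :: "('a, 'l) cinterp \<Rightarrow> 'a list \<Rightarrow> 'l cvalue" where
  "body_val I bs = foldr (\<lambda>b U. cv_times (I b) U) bs cv_one"

definition rule_val :: "('a, 'l) cinterp \<Rightarrow> ('a, 'l) rule \<Rightarrow> 'l cvalue" where
  "rule_val I r = (case rlabel r of
       Some t \<Rightarrow> cv_prod (body_val I (rpos r)) (cv_label t)
     | None \<Rightarrow> body_val I (rpos r))"

definition TP :: "('a, 'l) program \<Rightarrow> ('a, 'l) cinterp \<Rightarrow> ('a, 'l) cinterp" where
  "TP P I p = \<Union> {rule_val I r | r. r \<in> P \<and> rhead r = p}"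

fun TP_iter :: "('a, 'l) program \<Rightarrow> nat \<Rightarrow> ('a, 'l) cinterp" where
  "TP_iter P 0 = (\<lambda>p. cv_zero)"
| "TP_iter P (Suc k) = TP P (TP_iter P k)"

definition TP_omega :: "('a, 'l) program \<Rightarrow> ('a, 'l) cinterp" where
  "TP_omega P p = (\<Union>k. TP_iter P k p)"

(* T_P up k for k \<in> {1,2,...} \<union> {\<omega>}; \<omega> is represented by \<infinity> *)
definition TP_up :: "('a, 'l) program \<Rightarrow> enat \<Rightarrow> ('a, 'l) cinterp" where
  "TP_up P k = (case k of enat n \<Rightarrow> TP_iter P n | \<infinity> \<Rightarrow> TP_omega P)"

definition cg_maximal_in :: "'l cgraph \<Rightarrow> 'l cvalue \<Rightarrow> bool" where
  "cg_maximal_in G U \<longleftrightarrow> G \<in> U \<and> (\<forall>G'\<in>U. cg_le G G' \<longrightarrow> cg_le G' G)"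

definition simple_path :: "'l cgraph \<Rightarrow> 'l list \<Rightarrow> bool" where
  "simple_path G vs \<longleftrightarrow> vs \<noteq> [] \<and> distinct vs \<and> set vs \<subseteq> cvertices G \<and>
                          successively (\<lambda>x y. (x, y) \<in> G) vs"

definition height :: "'l cgraph \<Rightarrow> enat" where
  "height G = Sup {enat (length vs) | vs. simple_path G vs}"

end

theory Submission
  imports Defs
begin

(* For a completely labelled program every value T_P^n(q) is the
   down-set of an explicit set of generating graphs: a generator at level n+1
   is G_1 * ... * G_m . t for a rule t : q <- B_1,...,B_m and generators G_i
   of the B_i at level n.  The key lemma says that every generator g contains a generator g'
   of the same atom whose level j satisfies j <= height g'.  It is proved by
   strong induction on the level: if the label t of the last rule already
   occurs in the body, complete labelling yields a generator of the same atom
   at a lower level inside g; otherwise the body generators are rebuilt at a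
   common level J <= height of their product, and appending the fresh vertex t
   extends a longest path by one.  For the theorem, such a g' below the
   maximal G lies in T_P^k(p) (since j <= h <= k); maximality forces G = g',
   and G lies in T_P^j(p), hence in T_P^h(p). *)

section \<open>Reflexive-transitive closure and the graph operations\<close>

lemma Field_rt_close:
  assumes "Field E \<subseteq> V" shows "Field (rt_close V E) = V"
proof
  show "Field (rt_close V E) \<subseteq> V"
    using assms trancl_subset_Field2[of E] unfolding rt_close_def Field_def by auto
  show "V \<subseteq> Field (rt_close V E)"
    unfolding rt_close_def Field_def by auto
qed

lemma rt_close_causal:
  assumes "Field E \<subseteq> V" shows "causal_graph (rt_close V E)"
  unfolding causal_graph_def Field_rt_close[OF assms]
  by (auto simp: rt_close_def trans_def intro: trancl_trans)

lemma rt_close_mono: "V \<subseteq> V' \<Longrightarrow> E \<subseteq> E' \<Longrightarrow> rt_close V E \<subseteq> rt_close V' E'"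
  unfolding rt_close_def using trancl_mono by blast

lemma rt_close_contains: "E \<subseteq> rt_close V E"
  unfolding rt_close_def by auto

lemma rt_close_least:
  assumes "causal_graph G" "E \<subseteq> G" "V \<subseteq> Field G"
  shows "rt_close V E \<subseteq> G"
proof -
  have "trans G" using assms(1) by (simp add: causal_graph_def)
  hence "E\<^sup>+ \<subseteq> G" using assms(2) by (metis trancl_id trancl_mono subsetI)
  moreover have "Id_on V \<subseteq> G" using assms(1,3) by (auto simp: causal_graph_def)
  ultimately show ?thesis unfolding rt_close_def by auto
qed

lemma Field_dot_edges: "Field (a \<union> b \<union> Field a \<times> Field b) \<subseteq> Field a \<union> Field b"
  unfolding Field_def by auto

lemma Field_cg_star: "Field (cg_star a b) = Field a \<union> Field b"
  unfolding cg_star_def cvertices_def by (rule Field_rt_close) (auto simp: Field_Un)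

lemma Field_cg_dot: "Field (cg_dot a b) = Field a \<union> Field b"
  unfolding cg_dot_def cvertices_def by (rule Field_rt_close) (rule Field_dot_edges)

lemma cg_star_causal: "causal_graph (cg_star a b)"
  unfolding cg_star_def cvertices_def by (rule rt_close_causal) (auto simp: Field_Un)

lemma cg_dot_causal: "causal_graph (cg_dot a b)"
  unfolding cg_dot_def cvertices_def by (rule rt_close_causal) (rule Field_dot_edges)

lemma cg_star_mono: "a \<subseteq> a' \<Longrightarrow> b \<subseteq> b' \<Longrightarrow> cg_star a b \<subseteq> cg_star a' b'"
  unfolding cg_star_def cvertices_def by (intro rt_close_mono) (use mono_Field in blast)+

lemma cg_dot_mono: "a \<subseteq> a' \<Longrightarrow> b \<subseteq> b' \<Longrightarrow> cg_dot a b \<subseteq> cg_dot a' b'"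
  unfolding cg_dot_def cvertices_def by (intro rt_close_mono) (use mono_Field in blast)+

lemma cg_star_upper1: "a \<subseteq> cg_star a b"
  and cg_star_upper2: "b \<subseteq> cg_star a b"
  unfolding cg_star_def using rt_close_contains[of "a \<union> b"] by blast+

lemma cg_dot_upper1: "a \<subseteq> cg_dot a b"
  unfolding cg_dot_def using rt_close_contains[of "a \<union> b \<union> cvertices a \<times> cvertices b"] by blast

lemma cg_star_least: "causal_graph G \<Longrightarrow> a \<subseteq> G \<Longrightarrow> b \<subseteq> G \<Longrightarrow> cg_star a b \<subseteq> G"
  unfolding cg_star_def cvertices_def
  by (rule rt_close_least) (use mono_Field[of a G] mono_Field[of b G] in auto)

lemma Field_label: "Field {(t, t)} = {t}"
  by (auto simp: Field_def)

lemma causal_label: "causal_graph {(t, t)}"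
  by (auto simp: causal_graph_def trans_def Field_def)

section \<open>Down-sets\<close>

lemma down_Int: "down A \<inter> down B = down {cg_star a b | a b. a \<in> A \<and> b \<in> B}"
proof
  show "down A \<inter> down B \<subseteq> down {cg_star a b | a b. a \<in> A \<and> b \<in> B}"
  proof
    fix G assume "G \<in> down A \<inter> down B"
    then obtain a b where "causal_graph G" "a \<in> A" "b \<in> B" "a \<subseteq> G" "b \<subseteq> G"
      unfolding down_def cg_le_def by blast
    moreover have "cg_star a b \<subseteq> G" using calculation cg_star_least by blast
    ultimately show "G \<in> down {cg_star a b | a b. a \<in> A \<and> b \<in> B}"
      unfolding down_def cg_le_def by blast
  qed
  show "down {cg_star a b | a b. a \<in> A \<and> b \<in> B} \<subseteq> down A \<inter> down B"
  proof
    fix G assume "G \<in> down {cg_star a b | a b. a \<in> A \<and> b \<in> B}"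
    then obtain a b where "causal_graph G" "a \<in> A" "b \<in> B" "cg_star a b \<subseteq> G"
      unfolding down_def cg_le_def by blast
    moreover have "a \<subseteq> G" "b \<subseteq> G"
      using calculation(4) cg_star_upper1 cg_star_upper2 by blast+
    ultimately show "G \<in> down A \<inter> down B" unfolding down_def cg_le_def by blast
  qed
qed

lemma cv_prod_label:
  assumes "\<forall>s\<in>S. causal_graph s"
  shows "cv_prod (down S) (cv_label t) = down {cg_dot s {(t, t)} | s. s \<in> S}"
proof
  show "cv_prod (down S) (cv_label t) \<subseteq> down {cg_dot s {(t, t)} | s. s \<in> S}"
  proof
    fix G assume "G \<in> cv_prod (down S) (cv_label t)"
    then obtain a b where G: "causal_graph G" "cg_dot a b \<subseteq> G" "a \<in> down S" "b \<in> cv_label t"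
      unfolding cv_prod_def down_def cg_le_def by blast
    then obtain s where s: "s \<in> S" "s \<subseteq> a" unfolding down_def cg_le_def by blast
    have "{(t, t)} \<subseteq> b" using G(4) unfolding cv_label_def down_def cg_le_def by blast
    hence "cg_dot s {(t, t)} \<subseteq> G" using cg_dot_mono[OF s(2)] G(2) by blast
    thus "G \<in> down {cg_dot s {(t, t)} | s. s \<in> S}"
      using G(1) s(1) unfolding down_def cg_le_def by blast
  qed
  show "down {cg_dot s {(t, t)} | s. s \<in> S} \<subseteq> cv_prod (down S) (cv_label t)"
  proof
    fix G assume "G \<in> down {cg_dot s {(t, t)} | s. s \<in> S}"
    then obtain s where s: "causal_graph G" "s \<in> S" "cg_dot s {(t, t)} \<subseteq> G"
      unfolding down_def cg_le_def by blast
    have "s \<in> down S" using s(2) assms unfolding down_def cg_le_def by auto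
    moreover have "{(t, t)} \<in> cv_label t"
      using causal_label unfolding cv_label_def down_def cg_le_def by auto
    ultimately have "cg_dot s {(t, t)} \<in> {cg_dot a b | a b. a \<in> down S \<and> b \<in> cv_label t}"
      by blast
    thus "G \<in> cv_prod (down S) (cv_label t)"
      using s(1,3) unfolding cv_prod_def down_def[of "{cg_dot a b | a b. a \<in> down S \<and> b \<in> cv_label t}"] cg_le_def
      by blast
  qed
qed

section \<open>Generators of the iterates of T_P\<close>

fun star_choices :: "'l cgraph set list \<Rightarrow> 'l cgraph set" where
  "star_choices [] = {{}}"
| "star_choices (A # As) = {cg_star g S | g S. g \<in> A \<and> S \<in> star_choices As}"

fun generators :: "('a, 'l) program \<Rightarrow> nat \<Rightarrow> 'a \<Rightarrow> 'l cgraph set" where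
  "generators P 0 q = {}"
| "generators P (Suc n) q =
     {cg_dot S {(t, t)} | r t S. r \<in> P \<and> rhead r = q \<and> rlabel r = Some t
        \<and> S \<in> star_choices (map (generators P n) (rpos r))}"

lemma star_choices_causal: "S \<in> star_choices As \<Longrightarrow> causal_graph S"
  by (cases As) (auto simp: cg_star_causal causal_graph_def[of "{}"])

lemma generators_causal: "g \<in> generators P n q \<Longrightarrow> causal_graph g"
  by (cases n) (auto simp: cg_dot_causal)

lemma body_val_down:
  "body_val (\<lambda>b. down (F b)) bs = down (star_choices (map F bs))"
proof (induction bs)
  case Nil
  show ?case by (auto simp: body_val_def cv_one_def down_def cg_le_def)
next
  case (Cons b bs)
  thus ?case by (simp add: body_val_def cv_times_def down_Int)
qed

lemma TP_iter_generators:
  assumes cl: "completely_labelled P"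
  shows "TP_iter P n q = down (generators P n q)"
proof (induction n arbitrary: q)
  case 0
  show ?case by (simp add: cv_zero_def down_def)
next
  case (Suc n)
  have iter: "TP_iter P n = (\<lambda>b. down (generators P n b))" using Suc by auto
  have rule_val: "rule_val (TP_iter P n) r
      = down {cg_dot s {(t, t)} | s. s \<in> star_choices (map (generators P n) (rpos r))}"
    if "rlabel r = Some t" for r t
    using that by (simp add: iter rule_val_def body_val_down cv_prod_label star_choices_causal)
  have labelled: "\<exists>t. rlabel r = Some t" if "r \<in> P" for r
    using cl that unfolding completely_labelled_def by blast
  show ?case
  proof (rule set_eqI)
    fix G
    have "G \<in> TP_iter P (Suc n) q \<longleftrightarrow> (\<exists>r\<in>P. rhead r = q \<and> G \<in> rule_val (TP_iter P n) r)"
      by (auto simp: TP_def)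
    also have "\<dots> \<longleftrightarrow> (\<exists>r t. r \<in> P \<and> rhead r = q \<and> rlabel r = Some t \<and>
         G \<in> down {cg_dot s {(t, t)} | s. s \<in> star_choices (map (generators P n) (rpos r))})"
    proof
      assume "\<exists>r\<in>P. rhead r = q \<and> G \<in> rule_val (TP_iter P n) r"
      then obtain r where r: "r \<in> P" "rhead r = q" "G \<in> rule_val (TP_iter P n) r" by blast
      moreover obtain t where "rlabel r = Some t" using labelled[OF r(1)] by blast
      ultimately show "\<exists>r t. r \<in> P \<and> rhead r = q \<and> rlabel r = Some t \<and>
         G \<in> down {cg_dot s {(t, t)} | s. s \<in> star_choices (map (generators P n) (rpos r))}"
        using rule_val by auto
    qed (use rule_val in auto)
    also have "\<dots> \<longleftrightarrow> G \<in> down (generators P (Suc n) q)"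
      unfolding generators.simps down_def cg_le_def by blast
    finally show "G \<in> TP_iter P (Suc n) q \<longleftrightarrow> G \<in> down (generators P (Suc n) q)" .
  qed
qed

lemma star_choices_mono:
  "(\<And>b. F b \<subseteq> F' b) \<Longrightarrow> star_choices (map F bs) \<subseteq> star_choices (map F' bs)"
  by (induction bs) (simp, fastforce)

lemma generators_Suc_mono: "generators P n q \<subseteq> generators P (Suc n) q"
proof (induction n arbitrary: q)
  case 0 show ?case by simp
next
  case (Suc n)
  have "star_choices (map (generators P n) bs) \<subseteq> star_choices (map (generators P (Suc n)) bs)" for bs
    by (rule star_choices_mono) (rule Suc.IH)
  thus ?case by (simp only: generators.simps) blast
qed

lemma generators_mono: "m \<le> n \<Longrightarrow> generators P m q \<subseteq> generators P n q"
  by (rule lift_Suc_mono_le[of "\<lambda>n. generators P n q"]) (rule generators_Suc_mono)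

lemma Field_star_choices:
  "S \<in> star_choices (map F bs) \<Longrightarrow> t \<in> Field S \<Longrightarrow> \<exists>b\<in>set bs. \<exists>g\<in>F b. g \<subseteq> S \<and> t \<in> Field g"
proof (induction bs arbitrary: S)
  case Nil thus ?case by simp
next
  case (Cons b bs)
  then obtain g S0 where S: "S = cg_star g S0" "g \<in> F b" "S0 \<in> star_choices (map F bs)" by auto
  show ?case
  proof (cases "t \<in> Field g")
    case True
    have "g \<subseteq> S" using S(1) cg_star_upper1 by blast
    thus ?thesis using True S(2) by auto
  next
    case False
    hence "t \<in> Field S0" using Cons.prems(2) S(1) by (simp add: Field_cg_star)
    then obtain b' g' where "b' \<in> set bs" "g' \<in> F b'" "g' \<subseteq> S0" "t \<in> Field g'"
      using Cons.IH[OF S(3)] by blast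
    moreover have "S0 \<subseteq> S" using S(1) cg_star_upper2 by blast
    ultimately show ?thesis by auto
  qed
qed

lemma label_occurrence:
  assumes cl: "completely_labelled P"
  shows "g \<in> generators P n q \<Longrightarrow> t \<in> Field g \<Longrightarrow> r \<in> P \<Longrightarrow> rlabel r = Some t
         \<Longrightarrow> \<exists>j\<le>n. \<exists>g'\<in>generators P j (rhead r). g' \<subseteq> g"
proof (induction n arbitrary: q g)
  case 0 thus ?case by simp
next
  case (Suc n)
  from Suc.prems(1) obtain r' t' S where r': "r' \<in> P" "rhead r' = q" "rlabel r' = Some t'"
    "S \<in> star_choices (map (generators P n) (rpos r'))" "g = cg_dot S {(t', t')}" by auto
  show ?case
  proof (cases "t = t'")
    case True
    hence "r = r'" using cl r'(1,3) Suc.prems(3,4) unfolding completely_labelled_def by metis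
    thus ?thesis using Suc.prems(1) r'(2) by blast
  next
    case False
    hence "t \<in> Field S"
      using Suc.prems(2) r'(5) Field_cg_dot[of S "{(t', t')}"] Field_label[of t'] by simp
    then obtain b gb where gb: "gb \<in> generators P n b" "gb \<subseteq> S" "t \<in> Field gb"
      using Field_star_choices[OF r'(4)] by blast
    obtain j g' where j: "j \<le> n" "g' \<in> generators P j (rhead r)" "g' \<subseteq> gb"
      using Suc.IH[OF gb(1) gb(3) Suc.prems(3,4)] by blast
    have "S \<subseteq> g" using r'(5) cg_dot_upper1 by blast
    hence "g' \<subseteq> g" using j(3) gb(2) by blast
    thus ?thesis using j(1,2) le_SucI by blast
  qed
qed

section \<open>Height\<close>

lemma simple_path_mono: "G \<subseteq> G' \<Longrightarrow> simple_path G vs \<Longrightarrow> simple_path G' vs"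
  unfolding simple_path_def cvertices_def
  using mono_Field[of G G'] by (auto elim: successively_mono)

lemma height_mono: "G \<subseteq> G' \<Longrightarrow> height G \<le> height G'"
  unfolding height_def by (rule Sup_subset_mono) (use simple_path_mono in blast)

lemma path_height: "simple_path G vs \<Longrightarrow> enat (length vs) \<le> height G"
  unfolding height_def by (rule Sup_upper) blast

lemma height_witness:
  assumes "enat J \<le> height S" "J > 0"
  shows "\<exists>vs. simple_path S vs \<and> J \<le> length vs"
proof -
  have "enat (J - 1) < enat J" using assms(2) by simp
  hence "enat (J - 1) < Sup {enat (length vs) | vs. simple_path S vs}"
    using assms(1) unfolding height_def by (rule order_less_le_trans)
  then obtain x where "x \<in> {enat (length vs) | vs. simple_path S vs}" "enat (J - 1) < x"
    using less_Sup_iff by blast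
  thus ?thesis using assms(2) by auto
qed

text \<open>Adding a fresh label t as a common successor of all vertices adds one to the height.\<close>
lemma height_dot_fresh:
  assumes "t \<notin> Field S" "enat J \<le> height S"
  shows "enat (Suc J) \<le> height (cg_dot S {(t, t)})"
proof -
  let ?g = "cg_dot S {(t, t)}"
  have Field_g: "Field ?g = Field S \<union> {t}"
    using Field_cg_dot[of S "{(t, t)}"] Field_label[of t] by simp
  have edge_to_t: "(x, t) \<in> ?g" if "x \<in> Field S \<union> {t}" for x
    using that rt_close_contains[of "S \<union> {(t, t)} \<union> cvertices S \<times> cvertices {(t, t)}"]
    by (auto simp: cg_dot_def cvertices_def Field_label)
  show ?thesis
  proof (cases "J = 0")
    case True
    have "simple_path ?g [t]" unfolding simple_path_def cvertices_def Field_g by simp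
    from path_height[OF this] True show ?thesis by (simp add: one_enat_def)
  next
    case False
    then obtain vs where vs: "simple_path S vs" "J \<le> length vs"
      using height_witness[OF assms(2)] by blast
    have in_S: "set vs \<subseteq> Field S" using vs(1) unfolding simple_path_def cvertices_def by blast
    have "successively (\<lambda>x y. (x, y) \<in> ?g) vs"
      using vs(1) cg_dot_upper1[of S "{(t, t)}"] unfolding simple_path_def
      by (auto elim: successively_mono)
    moreover have "last vs \<in> Field S" using vs(1) in_S unfolding simple_path_def by auto
    ultimately have "simple_path ?g (vs @ [t])"
      using vs(1) in_S assms(1) edge_to_t
      unfolding simple_path_def cvertices_def Field_g by (auto simp: successively_append_iff)
    have "enat (Suc J) \<le> enat (length (vs @ [t]))" using vs(2) by simp
    also have "\<dots> \<le> height ?g" using path_height[OF \<open>simple_path ?g (vs @ [t])\<close>] .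
    finally show ?thesis .
  qed
qed

text \<open>Generators of a product of choices can be replaced by smaller generators whose
  levels are bounded by their heights; raising all of them to their maximum level J
  yields a smaller product of choices with J bounded by its height.\<close>
lemma star_choices_rebuild:
  assumes "S \<in> star_choices (map (generators P n) bs)"
    and "\<forall>b\<in>set bs. \<forall>g\<in>generators P n b.
           \<exists>j g'. g' \<in> generators P j b \<and> g' \<subseteq> g \<and> enat j \<le> height g'"
  shows "\<exists>J S'. S' \<in> star_choices (map (generators P J) bs) \<and> S' \<subseteq> S \<and> enat J \<le> height S'"
  using assms
proof (induction bs arbitrary: S)
  case Nil
  thus ?case by (intro exI[of _ 0] exI[of _ "{}"]) (simp add: zero_enat_def[symmetric])
next
  case (Cons b bs)
  from Cons.prems(1) obtain g S0 where S: "S = cg_star g S0" "g \<in> generators P n b"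
    "S0 \<in> star_choices (map (generators P n) bs)" by auto
  obtain j g' where g': "g' \<in> generators P j b" "g' \<subseteq> g" "enat j \<le> height g'"
    using Cons.prems(2) S(2) by auto
  obtain J0 S0' where S0': "S0' \<in> star_choices (map (generators P J0) bs)" "S0' \<subseteq> S0"
    "enat J0 \<le> height S0'"
    using Cons.IH[OF S(3)] Cons.prems(2) by auto
  define J where "J = max j J0"
  have "g' \<in> generators P J b" using g'(1) generators_mono[of j J P b] unfolding J_def by auto
  moreover have "S0' \<in> star_choices (map (generators P J) bs)"
    using S0'(1) star_choices_mono[of "generators P J0" "generators P J" bs] generators_mono[of J0 J P]
    unfolding J_def by auto
  ultimately have mem: "cg_star g' S0' \<in> star_choices (map (generators P J) (b # bs))" by auto
  have sub: "cg_star g' S0' \<subseteq> S" using S(1) cg_star_mono[OF g'(2) S0'(2)] by simp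
  have "height g' \<le> height (cg_star g' S0')" "height S0' \<le> height (cg_star g' S0')"
    by (rule height_mono[OF cg_star_upper1], rule height_mono[OF cg_star_upper2])
  hence "enat J \<le> height (cg_star g' S0')" using g'(3) S0'(3) unfolding J_def
    by (cases "j \<le> J0") (auto simp: max_def)
  thus ?case using mem sub by blast
qed
lemma generator_below_height:
  assumes cl: "completely_labelled P"
  shows "g \<in> generators P n q \<Longrightarrow>
         \<exists>j g'. g' \<in> generators P j q \<and> g' \<subseteq> g \<and> enat j \<le> height g'"
proof (induction n arbitrary: q g rule: less_induct)
  case (less n)
  then obtain m where n: "n = Suc m" by (cases n) auto
  from less.prems n obtain r t S where r: "r \<in> P" "rhead r = q" "rlabel r = Some t"
    "S \<in> star_choices (map (generators P m) (rpos r))" "g = cg_dot S {(t, t)}" by auto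
  have "S \<subseteq> g" using r(5) cg_dot_upper1 by blast
  show ?case
  proof (cases "t \<in> Field S")
    case True
    \<comment> \<open>the label recurs: descend to a generator of q at a lower level\<close>
    then obtain b gb where gb: "gb \<in> generators P m b" "gb \<subseteq> S" "t \<in> Field gb"
      using Field_star_choices[OF r(4)] by blast
    obtain j g'' where j: "j \<le> m" "g'' \<in> generators P j q" "g'' \<subseteq> gb"
      using label_occurrence[OF cl gb(1) gb(3) r(1) r(3)] r(2) by blast
    have "j < n" using j(1) n by simp
    from less.IH[OF this j(2)] show ?thesis using j(3) gb(2) \<open>S \<subseteq> g\<close> by blast
  next
    case False
    \<comment> \<open>the label is fresh: rebuild the body and add t on top of a longest path\<close>
    obtain J S' where S': "S' \<in> star_choices (map (generators P J) (rpos r))" "S' \<subseteq> S"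
      "enat J \<le> height S'"
      using star_choices_rebuild[OF r(4)] less.IH n by blast
    have "cg_dot S' {(t, t)} \<in> generators P (Suc J) q" using r(1-3) S'(1) by auto
    moreover have "cg_dot S' {(t, t)} \<subseteq> g" using r(5) cg_dot_mono[OF S'(2)] by simp
    moreover have "t \<notin> Field S'" using False mono_Field[OF S'(2)] by blast
    ultimately show ?thesis using height_dot_fresh[OF _ S'(3)] by blast
  qed
qed

lemma generator_in_TP_iter:
  "completely_labelled P \<Longrightarrow> g \<in> generators P n q \<Longrightarrow> g \<in> TP_iter P n q"
  using generators_causal by (auto simp: TP_iter_generators down_def cg_le_def)

lemma generator_below_TP_up:
  assumes "completely_labelled P" "G \<in> TP_up P k q"
  shows "\<exists>n. \<exists>g\<in>generators P n q. g \<subseteq> G"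
proof -
  obtain n where "G \<in> TP_iter P n q"
    using assms(2) by (cases k) (auto simp: TP_up_def TP_omega_def)
  thus ?thesis by (auto simp: TP_iter_generators[OF assms(1)] down_def cg_le_def)
qed

lemma generator_in_TP_up:
  assumes "completely_labelled P" "g \<in> generators P j q" "enat j \<le> k"
  shows "g \<in> TP_up P k q"
proof (cases k)
  case (enat n)
  hence "g \<in> generators P n q" using assms(2,3) generators_mono[of j n P q] by auto
  thus ?thesis using enat generator_in_TP_iter[OF assms(1)] by (simp add: TP_up_def)
qed (use generator_in_TP_iter[OF assms(1,2)] in \<open>auto simp: TP_up_def TP_omega_def\<close>)

theorem mainTheorem18:
  fixes P :: "('a, 'l) program" and p :: 'a and k :: enat
    and G :: "'l cgraph" and h :: nat
  assumes "positive P"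
    and "completely_labelled P"
    and "k \<ge> 1"
    and "cg_maximal_in G (TP_up P k p)"
    and "height G = enat h"
    and "enat h \<le> k"
  shows "G \<in> TP_iter P h p"
proof -
  note cl = assms(2)
  have G: "G \<in> TP_up P k p" and maximal: "\<forall>G'\<in>TP_up P k p. G' \<subseteq> G \<longrightarrow> G \<subseteq> G'"
    using assms(4) unfolding cg_maximal_in_def cg_le_def by auto
  obtain n g where g: "g \<in> generators P n p" "g \<subseteq> G"
    using generator_below_TP_up[OF cl G] by blast
  obtain j g' where g': "g' \<in> generators P j p" "g' \<subseteq> g" "enat j \<le> height g'"
    using generator_below_height[OF cl g(1)] by blast
  have "enat j \<le> enat h"
    using g' g(2) height_mono[of g' G] assms(5) by (metis order_trans subset_trans)
  hence "j \<le> h" by simp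
  have "enat j \<le> k" using \<open>j \<le> h\<close> assms(6) by (meson enat_ord_simps(1) order_trans)
  hence "g' \<in> TP_up P k p" by (rule generator_in_TP_up[OF cl g'(1)])
  hence "G = g'" using maximal g'(2) g(2) by blast
  moreover have "g' \<in> generators P h p" using generators_mono[OF \<open>j \<le> h\<close>, of P p] g'(1) by (rule subsetD)
  ultimately show ?thesis using generator_in_TP_iter[OF cl] by simp
qed

end
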